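(* Let $\rho_{\mathrm W}=\frac{1-\eta}{4}\mathbb{1}\otimes\mathbb{1}+\eta|\psi^-\rangle\langle\psi^-|$ be the two-qubit Werner state, where $|\psi^-\rangle=\frac{1}{\sqrt2}(|01\rangle-|10\rangle)$ and $\eta\in[0,1]$. Let $\pm\vec n_1,\dots,\pm\vec n_6$ be the 12 vertices of a regular icosahedron inscribed in the unit sphere of $\mathbb{R}^3$. Suppose the assemblage generated on Bob's side by Alice's six projective measurements of the observables $\vec n_k\cdot\vec\sigma$, $k=1,\dots,6$, admits a local hidden state model. Then $$\eta\le \frac{3+\sqrt5}{3(1+\sqrt5)}\approx 0.5393.$$
   Context: $\vec\sigma=(\sigma_x,\sigma_y,\sigma_z)$ denotes the vector of Pauli matrices. A local hidden state model for an assemblage $\{\sigma_{i|X}\}$ means that there exist: - a probability distribution $\{\kappa_\lambda\}$, - response distributions $p^{(\lambda)}_i(x)$, - qubit density matrices $\rho^{(\lambda)}$, such that $\sigma_{i|X}=\sum_\lambda\kappa_\lambda p^{(\lambda)}_i(x)\rho^{(\lambda)}$ for every measurement $X$ in the given set and every outcome $i$. The assemblage is defined by $\sigma_{i|X}=\mathrm{Tr}_A[(\Pi^X_i\otimes\mathbb{1})\rho_{\mathrm W}]$, where $\Pi^X_i$ are the eigenprojectors of the observable $X$. *)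

theory Defs
  imports "Jordan_Normal_Form.Matrix" "Jordan_Normal_Form.Conjugate"
begin

(* Qubit operators are complex 2x2 matrices; two-qubit operators are 4x4 matrices
   in the product basis |ab> = e_(2a+b), a = Alice's qubit, b = Bob's qubit. *)

definition sigma_x :: "complex mat" where
  "sigma_x = mat_of_rows_list 2 [[0, 1], [1, 0]]"
definition sigma_y :: "complex mat" where
  "sigma_y = mat_of_rows_list 2 [[0, - \<i>], [\<i>, 0]]"
definition sigma_z :: "complex mat" where
  "sigma_z = mat_of_rows_list 2 [[1, 0], [0, -1]]"

definition n_dot_sigma :: "real vec \<Rightarrow> complex mat" where
  "n_dot_sigma n = complex_of_real (n $ 0) \<cdot>\<^sub>m sigma_x + complex_of_real (n $ 1) \<cdot>\<^sub>m sigma_y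
                   + complex_of_real (n $ 2) \<cdot>\<^sub>m sigma_z"

(* eigenprojectors of n.sigma (|n| = 1): outcome i=0 <-> eigenvalue +1, i=1 <-> eigenvalue -1 *)
definition eig_proj :: "real vec \<Rightarrow> nat \<Rightarrow> complex mat" where
  "eig_proj n i = (1/2) \<cdot>\<^sub>m (1\<^sub>m 2 + (if i = 0 then 1 else -1) \<cdot>\<^sub>m n_dot_sigma n)"

definition kron :: "complex mat \<Rightarrow> complex mat \<Rightarrow> complex mat" where
  "kron A B = mat (dim_row A * dim_row B) (dim_col A * dim_col B)
     (\<lambda>(i, j). A $$ (i div dim_row B, j div dim_col B) * B $$ (i mod dim_row B, j mod dim_col B))"

definition ptrace_A :: "complex mat \<Rightarrow> complex mat" where
  "ptrace_A M = mat 2 2 (\<lambda>(i, j). \<Sum>a<2. M $$ (2 * a + i, 2 * a + j))"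

definition psi_minus :: "complex vec" where
  "psi_minus = vec_of_list [0, 1 / complex_of_real (sqrt 2), - 1 / complex_of_real (sqrt 2), 0]"

definition ket_bra :: "complex vec \<Rightarrow> complex mat" where
  "ket_bra v = mat (dim_vec v) (dim_vec v) (\<lambda>(i, j). v $ i * cnj (v $ j))"

definition werner :: "real \<Rightarrow> complex mat" where
  "werner \<eta> = complex_of_real ((1 - \<eta>) / 4) \<cdot>\<^sub>m 1\<^sub>m 4
               + complex_of_real \<eta> \<cdot>\<^sub>m ket_bra psi_minus"

definition assemblage :: "real \<Rightarrow> real vec \<Rightarrow> nat \<Rightarrow> complex mat" where
  "assemblage \<eta> n i = ptrace_A (kron (eig_proj n i) (1\<^sub>m 2) * werner \<eta>)"

definition density_qubit :: "complex mat \<Rightarrow> bool" where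
  "density_qubit A \<longleftrightarrow> A \<in> carrier_mat 2 2
     \<and> (\<forall>i<2. \<forall>j<2. A $$ (i, j) = cnj (A $$ (j, i)))
     \<and> (\<forall>v \<in> carrier_vec 2. Im (conjugate v \<bullet> (A *\<^sub>v v)) = 0 \<and> Re (conjugate v \<bullet> (A *\<^sub>v v)) \<ge> 0)
     \<and> A $$ (0, 0) + A $$ (1, 1) = 1"

(* LHS model (matrix identity stated entrywise; all matrices involved are 2x2) for the assemblage generated by the measurements of n_k . sigma, k in K
   (two outcomes i in {0,1}); hidden variables range over a finite index set L. *)
definition has_LHS :: "real \<Rightarrow> (nat \<Rightarrow> real vec) \<Rightarrow> nat set \<Rightarrow> bool" where
  "has_LHS \<eta> n K \<longleftrightarrow>
     (\<exists>(L :: nat set) (\<kappa> :: nat \<Rightarrow> real) (p :: nat \<Rightarrow> nat \<Rightarrow> nat \<Rightarrow> real) (\<rho> :: nat \<Rightarrow> complex mat).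
        finite L \<and> (\<forall>l\<in>L. \<kappa> l \<ge> 0) \<and> (\<Sum>l\<in>L. \<kappa> l) = 1
        \<and> (\<forall>l\<in>L. \<forall>x\<in>K. (\<forall>i<2. p l x i \<ge> 0) \<and> (\<Sum>i<2. p l x i) = 1)
        \<and> (\<forall>l\<in>L. density_qubit (\<rho> l))
        \<and> (\<forall>x\<in>K. \<forall>i<2. \<forall>a<2. \<forall>b<2. assemblage \<eta> (n x) i $$ (a, b)
              = (\<Sum>l\<in>L. complex_of_real (\<kappa> l * p l x i) * \<rho> l $$ (a, b))))"

(* golden ratio and the standard regular icosahedron inscribed in the unit sphere:
   the 12 cyclic permutations of (0, +-1, +-phi), normalised *)
definition phi_gold :: real where "phi_gold = (1 + sqrt 5) / 2"

definition std_icosa :: "real vec set" where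
  "std_icosa = (\<lambda>v. (1 / sqrt (1 + phi_gold\<^sup>2)) \<cdot>\<^sub>v v) `
     {vec_of_list [0, s, t * phi_gold] | s t. s \<in> {-1, 1} \<and> t \<in> {-1, 1}}
   \<union> (\<lambda>v. (1 / sqrt (1 + phi_gold\<^sup>2)) \<cdot>\<^sub>v v) `
     {vec_of_list [s, t * phi_gold, 0] | s t. s \<in> {-1, 1} \<and> t \<in> {-1, 1}}
   \<union> (\<lambda>v. (1 / sqrt (1 + phi_gold\<^sup>2)) \<cdot>\<^sub>v v) `
     {vec_of_list [t * phi_gold, 0, s] | s t. s \<in> {-1, 1} \<and> t \<in> {-1, 1}}"

definition icosa_vertex_sets :: "real vec set set" where
  "icosa_vertex_sets = {(\<lambda>v. R *\<^sub>v v) ` std_icosa | R.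
       R \<in> carrier_mat 3 3 \<and> transpose_mat R * R = 1\<^sub>m 3}"

end

theory Submission
  imports Defs "Jordan_Normal_Form.Determinant"
begin

(*
  Bob's conditional states are sigma_{i|n} = (1 -+ eta n.sigma)/4, so in a local hidden state
  model with Bloch vectors r_l of the hidden states, eta = sum_l kappa_l (p_l(-|n) - p_l(+|n)) n.r_l
  <= sum_l kappa_l |n.r_l| for every unit axis n.  Summing over the six axes gives
  6 eta <= max_{|r| <= 1} sum_k |n_k.r|.  For a sign choice e_k the vector sum_k e_k n_k has
  length at most 2 phi = 1 + sqrt 5, which bounds that maximum; hence
  eta <= (1 + sqrt 5)/6 = (3 + sqrt 5)/(3 (1 + sqrt 5)).
*)

section \<open>Vectors and orthogonal matrices\<close>

lemma vec3_eq_vec_of_list: "y \<in> carrier_vec 3 \<Longrightarrow> y = vec_of_list [y $ 0, y $ 1, y $ 2]"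
  by (rule eq_vecI) (auto simp: less_Suc_eq numeral_eq_Suc vec_index_vCons)

lemma uminus_smult_vec: "- (c \<cdot>\<^sub>v v) = c \<cdot>\<^sub>v (- v :: 'a :: comm_ring vec)"
  by (rule eq_vecI) auto

lemma uminus_vCons: "- vCons a v = vCons (- a) (- v :: 'a :: group_add vec)"
  by (rule eq_vecI) (auto simp: vec_index_vCons)

lemma uminus_vNil: "- vNil = (vNil :: 'a :: group_add vec)"
  by (rule eq_vecI) auto

lemma smult_vCons: "c \<cdot>\<^sub>v vCons a v = vCons (c * a) (c \<cdot>\<^sub>v v)"
  by (rule eq_vecI) (auto simp: vec_index_vCons)

lemma smult_vNil: "c \<cdot>\<^sub>v vNil = vNil"
  by (rule eq_vecI) auto

lemma scalar_prod_le_mult_of_norm_bounds: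
  fixes v w :: "real vec"
  assumes "v \<in> carrier_vec n" "w \<in> carrier_vec n"
    and "v \<bullet> v \<le> a\<^sup>2" "w \<bullet> w \<le> b\<^sup>2" "a > 0" "b > 0"
  shows "v \<bullet> w \<le> a * b"
proof -
  have "0 \<le> (\<Sum>i\<in>{0..<n}. (b * v $ i - a * w $ i)\<^sup>2)"
    by (rule sum_nonneg) simp
  also have "\<dots> = b\<^sup>2 * (v \<bullet> v) - 2 * a * b * (v \<bullet> w) + a\<^sup>2 * (w \<bullet> w)"
    using assms(1,2) unfolding scalar_prod_def
    by (simp add: power2_eq_square algebra_simps sum.distrib sum_subtractf sum_distrib_left)
  also have "\<dots> \<le> b\<^sup>2 * a\<^sup>2 - 2 * a * b * (v \<bullet> w) + a\<^sup>2 * b\<^sup>2"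
    using assms(3-6) by (intro add_mono diff_mono mult_left_mono) simp_all
  finally have "2 * a * b * (v \<bullet> w) \<le> 2 * a * b * (a * b)"
    by (simp add: power2_eq_square algebra_simps)
  then show ?thesis
    using assms(5,6) by simp
qed

lemma orthogonal_mult_mat_vec_scalar_prod:
  fixes R :: "'a :: comm_ring_1 mat"
  assumes "R \<in> carrier_mat n n" "transpose_mat R * R = 1\<^sub>m n" "x \<in> carrier_vec n" "y \<in> carrier_vec n"
  shows "(R *\<^sub>v x) \<bullet> (R *\<^sub>v y) = x \<bullet> y"
proof -
  have "(R *\<^sub>v x) \<bullet> (R *\<^sub>v y) = (transpose_mat R *\<^sub>v (R *\<^sub>v x)) \<bullet> y"
    using assms by (simp add: transpose_vec_mult_scalar)
  also have "transpose_mat R *\<^sub>v (R *\<^sub>v x) = x"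
    using assms by (simp flip: assoc_mult_mat_vec)
  finally show ?thesis .
qed

lemma orthogonal_transpose:
  fixes R :: "'a :: field mat"
  assumes "R \<in> carrier_mat n n" "transpose_mat R * R = 1\<^sub>m n"
  shows "transpose_mat (transpose_mat R) * transpose_mat R = 1\<^sub>m n"
  using mat_mult_left_right_inverse[OF transpose_carrier_mat[THEN iffD2, OF assms(1)] assms] by simp

lemma mult_mat_vec_uminus:
  fixes A :: "'a :: comm_ring mat"
  assumes "A \<in> carrier_mat nr nc" "v \<in> carrier_vec nc"
  shows "A *\<^sub>v (- v) = - (A *\<^sub>v v)"
  by (rule eq_vecI) (use assms in auto)

lemma orthogonal_mult_mat_vec_inj:
  fixes R :: "'a :: comm_ring_1 mat"
  assumes "R \<in> carrier_mat n n" "transpose_mat R * R = 1\<^sub>m n" "x \<in> carrier_vec n" "y \<in> carrier_vec n"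
    and "R *\<^sub>v x = R *\<^sub>v y"
  shows "x = y"
proof -
  have "transpose_mat R *\<^sub>v (R *\<^sub>v z) = z" if "z \<in> carrier_vec n" for z
    using assms(1,2) that by (simp flip: assoc_mult_mat_vec)
  then show ?thesis
    using assms(3-5) by metis
qed

lemma sum_abs_scalar_prod_reindex_antipodal:
  fixes u :: "'i \<Rightarrow> 'a :: linordered_idom vec" and v :: "'j \<Rightarrow> 'a vec"
  assumes "finite A" "card A = card B"
    and "u ` A \<union> uminus ` u ` A = v ` B \<union> uminus ` v ` B"
    and "\<And>b b'. b \<in> B \<Longrightarrow> b' \<in> B \<Longrightarrow> v b = v b' \<or> v b = - v b' \<Longrightarrow> b = b'"
    and "\<And>b. b \<in> B \<Longrightarrow> dim_vec (v b) = dim_vec r"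
  shows "(\<Sum>a\<in>A. \<bar>u a \<bullet> r\<bar>) = (\<Sum>b\<in>B. \<bar>v b \<bullet> r\<bar>)"
proof -
  have "\<forall>a\<in>A. \<exists>b\<in>B. u a = v b \<or> u a = - v b"
    using assms(3) by blast
  then obtain idx where idx: "\<And>a. a \<in> A \<Longrightarrow> idx a \<in> B \<and> (u a = v (idx a) \<or> u a = - v (idx a))"
    by metis
  have onto: "idx ` A = B"
  proof
    show "B \<subseteq> idx ` A"
    proof
      fix b assume b: "b \<in> B"
      then obtain a where a: "a \<in> A" and "v b = u a \<or> v b = - u a"
        using assms(3) by blast
      with idx[OF a] have "v b = v (idx a) \<or> v b = - v (idx a)"
        by auto
      then have "b = idx a"
        using assms(4) b idx a by blast
      with a show "b \<in> idx ` A" by blast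
    qed
  qed (use idx in blast)
  then have "inj_on idx A"
    using assms(1,2) by (simp add: eq_card_imp_inj_on)
  then have "(\<Sum>b\<in>B. \<bar>v b \<bullet> r\<bar>) = (\<Sum>a\<in>A. \<bar>v (idx a) \<bullet> r\<bar>)"
    by (simp flip: onto add: sum.reindex)
  also have "\<dots> = (\<Sum>a\<in>A. \<bar>u a \<bullet> r\<bar>)"
  proof (rule sum.cong)
    fix a assume a: "a \<in> A"
    then have "dim_vec (v (idx a)) = dim_vec r"
      using idx assms(5) by blast
    then show "\<bar>v (idx a) \<bullet> r\<bar> = \<bar>u a \<bullet> r\<bar>"
      using idx[OF a] by (auto simp: scalar_prod_uminus_left)
  qed simp
  finally show ?thesis by simp
qed

section \<open>The Werner assemblage\<close>

lemma sum_lessThan_2: "(\<Sum>m<(2::nat). f m) = f 0 + (f 1 :: 'a :: comm_monoid_add)"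
  by (simp add: eval_nat_numeral)

lemma sum_lessThan_4: "(\<Sum>m<(4::nat). f m) = f 0 + f 1 + f 2 + (f 3 :: 'a :: comm_monoid_add)"
  by (simp add: eval_nat_numeral add.assoc)

lemma ptrace_A_kron_one_mult_index:
  fixes P M :: "complex mat"
  assumes "P \<in> carrier_mat 2 2" "M \<in> carrier_mat 4 4" "a < 2" "b < 2"
  shows "ptrace_A (kron P (1\<^sub>m 2) * M) $$ (a, b)
           = (\<Sum>x<2. \<Sum>y<2. P $$ (x, y) * M $$ (2 * y + a, 2 * x + b))"
proof -
  have "a = 0 \<or> a = 1"
    using assms(3) by auto
  have "(kron P (1\<^sub>m 2) * M) $$ (2 * x + a, 2 * x + b)
          = (\<Sum>y<2. P $$ (x, y) * M $$ (2 * y + a, 2 * x + b))" if "x < 2" for x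
  proof -
    have "(kron P (1\<^sub>m 2) * M) $$ (2 * x + a, 2 * x + b)
            = (\<Sum>m<4. P $$ (x, m div 2) * (1\<^sub>m 2 :: complex mat) $$ (a, m mod 2) * M $$ (m, 2 * x + b))"
      using assms that by (simp add: kron_def scalar_prod_def atLeast0LessThan)
    also have "\<dots> = (\<Sum>y<2. P $$ (x, y) * M $$ (2 * y + a, 2 * x + b))"
      using \<open>a = 0 \<or> a = 1\<close> by (elim disjE) (simp_all add: sum_lessThan_4 sum_lessThan_2)
    finally show ?thesis .
  qed
  then show ?thesis
    using assms(3,4) unfolding ptrace_A_def by simp
qed

lemma pauli_carrier: "sigma_x \<in> carrier_mat 2 2" "sigma_y \<in> carrier_mat 2 2" "sigma_z \<in> carrier_mat 2 2"
  unfolding sigma_x_def sigma_y_def sigma_z_def mat_of_rows_list_def by auto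

lemma n_dot_sigma_carrier: "n_dot_sigma n \<in> carrier_mat 2 2"
  unfolding n_dot_sigma_def by (intro smult_carrier_mat add_carrier_mat pauli_carrier)

lemma eig_proj_carrier: "eig_proj n i \<in> carrier_mat 2 2"
  unfolding eig_proj_def by (intro smult_carrier_mat add_carrier_mat one_carrier_mat n_dot_sigma_carrier)

lemma werner_carrier: "werner \<eta> \<in> carrier_mat 4 4"
proof -
  have dim: "dim_vec psi_minus = 4"
    by (simp add: psi_minus_def)
  show ?thesis
    unfolding werner_def ket_bra_def dim by (intro smult_carrier_mat add_carrier_mat one_carrier_mat mat_carrier)
qed

lemma n_dot_sigma_index:
  "n_dot_sigma n $$ (0, 0) = n $ 2" "n_dot_sigma n $$ (1, 1) = - n $ 2"
  "n_dot_sigma n $$ (0, 1) = n $ 0 - \<i> * n $ 1" "n_dot_sigma n $$ (1, 0) = n $ 0 + \<i> * n $ 1"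
  unfolding n_dot_sigma_def sigma_x_def sigma_y_def sigma_z_def mat_of_rows_list_def
  by simp_all

lemma eig_proj_index:
  assumes "x < 2" "y < 2"
  shows "eig_proj n i $$ (x, y)
           = ((if x = y then 1 else 0) + (if i = 0 then 1 else - 1) * n_dot_sigma n $$ (x, y)) / 2"
  using assms n_dot_sigma_carrier[of n] unfolding eig_proj_def by auto

lemma psi_minus_outer_index:
  assumes "i < 4" "j < 4"
  shows "psi_minus $ i * cnj (psi_minus $ j)
           = (if i \<in> {1, 2} \<and> j \<in> {1, 2} then if i = j then 1 / 2 else - 1 / 2 else 0)"
proof -
  have half: "1 / complex_of_real (sqrt 2) * (1 / complex_of_real (sqrt 2)) = 1 / 2"
    by (simp flip: of_real_mult)
  show ?thesis
    using assms half by (auto simp: psi_minus_def less_Suc_eq numeral_eq_Suc)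
qed

lemma werner_index:
  assumes "i < 4" "j < 4"
  shows "werner \<eta> $$ (i, j) = (if i = j then complex_of_real ((1 - \<eta>) / 4) else 0)
           + complex_of_real \<eta> * (if i \<in> {1, 2} \<and> j \<in> {1, 2} then if i = j then 1 / 2 else - 1 / 2 else 0)"
proof -
  have "werner \<eta> $$ (i, j) = (if i = j then complex_of_real ((1 - \<eta>) / 4) else 0)
           + complex_of_real \<eta> * (psi_minus $ i * cnj (psi_minus $ j))"
    using assms unfolding werner_def ket_bra_def by (simp add: psi_minus_def)
  then show ?thesis
    by (simp only: psi_minus_outer_index[OF assms])
qed

lemma assemblage_eq:
  "assemblage \<eta> n i
     = (1 / 4) \<cdot>\<^sub>m (1\<^sub>m 2 - complex_of_real (if i = 0 then \<eta> else - \<eta>) \<cdot>\<^sub>m n_dot_sigma n)"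
  (is "_ = ?B")
proof (rule eq_matI)
  have B: "?B \<in> carrier_mat 2 2" and "dim_row ?B = 2" "dim_col ?B = 2"
    by (intro smult_carrier_mat minus_carrier_mat one_carrier_mat n_dot_sigma_carrier)
      (use n_dot_sigma_carrier[of n] in simp_all)
  then show "dim_row (assemblage \<eta> n i) = dim_row ?B" "dim_col (assemblage \<eta> n i) = dim_col ?B"
    by (simp_all add: assemblage_def ptrace_A_def)
  fix a b assume "a < dim_row ?B" "b < dim_col ?B"
  then have "a = 0 \<or> a = 1" "b = 0 \<or> b = 1"
    using B by auto
  then show "assemblage \<eta> n i $$ (a, b) = ?B $$ (a, b)"
    unfolding assemblage_def using n_dot_sigma_carrier[of n]
    by (elim disjE; simp add: ptrace_A_kron_one_mult_index[OF eig_proj_carrier werner_carrier]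
        sum_lessThan_2 eig_proj_index werner_index n_dot_sigma_index n_dot_sigma_index[unfolded One_nat_def];
        simp add: field_simps)
qed

text \<open>The components are \<open>Tr(\<sigma>\<^sub>x M)\<close>, \<open>Tr(\<sigma>\<^sub>y M)\<close>, \<open>Tr(\<sigma>\<^sub>z M)\<close>.\<close>

definition bloch_vector :: "complex mat \<Rightarrow> real vec" where
  "bloch_vector M = vec_of_list
     [Re (M $$ (0, 1) + M $$ (1, 0)), Im (M $$ (1, 0) - M $$ (0, 1)), Re (M $$ (0, 0) - M $$ (1, 1))]"

lemma bloch_vector_carrier: "bloch_vector M \<in> carrier_vec 3"
  by (rule carrier_vecI) (simp add: bloch_vector_def)

lemma bloch_vector_assemblage:
  assumes "n \<in> carrier_vec 3"
  shows "bloch_vector (assemblage \<eta> n i) = (if i = 0 then - \<eta> / 2 else \<eta> / 2) \<cdot>\<^sub>v n"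
  using assms n_dot_sigma_carrier[of n] unfolding assemblage_eq bloch_vector_def
  by (intro eq_vecI) (auto simp: n_dot_sigma_index n_dot_sigma_index[unfolded One_nat_def]
      less_Suc_eq numeral_eq_Suc vec_index_vCons field_simps)

lemma scalar_prod_bloch_vector_lincomb:
  assumes "\<forall>a<2. \<forall>b<2. A $$ (a, b) = (\<Sum>l\<in>L. complex_of_real (c l) * B l $$ (a, b))"
    and "w \<in> carrier_vec 3"
  shows "w \<bullet> bloch_vector A = (\<Sum>l\<in>L. c l * (w \<bullet> bloch_vector (B l)))"
proof -
  obtain w0 w1 w2 where w: "w = vec_of_list [w0, w1, w2]"
    using vec3_eq_vec_of_list[OF assms(2)] by blast
  show ?thesis
    unfolding w bloch_vector_def using assms(1)
    by (simp add: sum.distrib sum_subtractf sum_distrib_left algebra_simps)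
qed

lemma quadratic_form_2:
  assumes "M \<in> carrier_mat 2 2"
  shows "conjugate (vec_of_list [x, y]) \<bullet> (M *\<^sub>v vec_of_list [x, y])
           = cnj x * (M $$ (0, 0) * x + M $$ (0, 1) * y) + cnj y * (M $$ (1, 0) * x + M $$ (1, 1) * y)"
  using assms by (simp add: scalar_prod_def atLeast0LessThan sum_lessThan_2)

lemma density_qubit_entries:
  assumes "density_qubit \<rho>"
  obtains a d b where "\<rho> $$ (0, 0) = complex_of_real a" "\<rho> $$ (1, 1) = complex_of_real d"
    "\<rho> $$ (0, 1) = b" "\<rho> $$ (1, 0) = cnj b" "a + d = 1" "(cmod b)\<^sup>2 \<le> a * d"
proof -
  have C: "\<rho> \<in> carrier_mat 2 2" and H: "\<And>i j. i < 2 \<Longrightarrow> j < 2 \<Longrightarrow> \<rho> $$ (i, j) = cnj (\<rho> $$ (j, i))"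
    and P: "\<And>v. v \<in> carrier_vec 2 \<Longrightarrow> Re (conjugate v \<bullet> (\<rho> *\<^sub>v v)) \<ge> 0"
    and T: "\<rho> $$ (0, 0) + \<rho> $$ (1, 1) = 1"
    using assms unfolding density_qubit_def by blast+
  define a where "a = Re (\<rho> $$ (0, 0))"
  define d where "d = Re (\<rho> $$ (1, 1))"
  define b where "b = \<rho> $$ (0, 1)"
  have a: "\<rho> $$ (0, 0) = complex_of_real a"
    using H[of 0 0] unfolding a_def by (simp add: complex_eq_iff)
  have d: "\<rho> $$ (1, 1) = complex_of_real d"
    using H[of 1 1] unfolding d_def by (simp add: complex_eq_iff)
  have b: "\<rho> $$ (1, 0) = cnj b"
    using H[of 1 0] unfolding b_def by simp
  have ad: "a + d = 1"
    using arg_cong[OF T, of Re] unfolding a_def d_def by simp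
  \<comment> \<open>positivity on \<open>(-b, a)\<close> and \<open>(d, -cnj b)\<close> gives \<open>a \<cdot> det \<rho> \<ge> 0\<close> and \<open>d \<cdot> det \<rho> \<ge> 0\<close>\<close>
  have "0 \<le> Re (conjugate (vec_of_list [- b, complex_of_real a]) \<bullet> (\<rho> *\<^sub>v vec_of_list [- b, complex_of_real a]))"
    by (rule P, rule carrier_vecI) simp
  also have "\<dots> = a * (a * d - (cmod b)\<^sup>2)"
    unfolding quadratic_form_2[OF C] using a d b b_def
    by (simp add: cmod_power2) (simp add: algebra_simps power2_eq_square)
  finally have det_a: "0 \<le> a * (a * d - (cmod b)\<^sup>2)" .
  have "0 \<le> Re (conjugate (vec_of_list [complex_of_real d, - cnj b]) \<bullet> (\<rho> *\<^sub>v vec_of_list [complex_of_real d, - cnj b]))"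
    by (rule P, rule carrier_vecI) simp
  also have "\<dots> = d * (a * d - (cmod b)\<^sup>2)"
    unfolding quadratic_form_2[OF C] using a d b b_def
    by (simp add: cmod_power2) (simp add: algebra_simps power2_eq_square)
  finally have det_d: "0 \<le> d * (a * d - (cmod b)\<^sup>2)" .
  have "(cmod b)\<^sup>2 \<le> a * d"
    using add_nonneg_nonneg[OF det_a det_d] ad by (simp add: distrib_right[symmetric])
  with a d b ad show thesis
    using that b_def by blast
qed

lemma density_qubit_bloch_vector_norm:
  assumes "density_qubit \<rho>"
  shows "bloch_vector \<rho> \<bullet> bloch_vector \<rho> \<le> 1"
proof -
  obtain a d b where entries: "\<rho> $$ (0, 0) = complex_of_real a" "\<rho> $$ (1, 1) = complex_of_real d"
    "\<rho> $$ (0, 1) = b" "\<rho> $$ (1, 0) = cnj b" and ad: "a + d = 1" and det: "(cmod b)\<^sup>2 \<le> a * d"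
    using density_qubit_entries[OF assms] by blast
  have "bloch_vector \<rho> \<bullet> bloch_vector \<rho> = (a + d)\<^sup>2 - 4 * (a * d - (cmod b)\<^sup>2)"
    unfolding bloch_vector_def cmod_power2 using entries[unfolded One_nat_def] entries
    by (simp add: power2_eq_square algebra_simps)
  then show ?thesis
    using ad det by simp
qed

section \<open>The linear steering inequality\<close>

lemma lhs_model_steering_term_le:
  fixes \<kappa> :: "nat \<Rightarrow> real" and p :: "nat \<Rightarrow> nat \<Rightarrow> real" and \<rho> :: "nat \<Rightarrow> complex mat"
  assumes "\<forall>l\<in>L. \<kappa> l \<ge> 0" "\<forall>l\<in>L. (\<forall>i<2. p l i \<ge> 0) \<and> (\<Sum>i<2. p l i) = 1"
    and "\<forall>i<2. \<forall>a<2. \<forall>b<2. assemblage \<eta> x i $$ (a, b)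
           = (\<Sum>l\<in>L. complex_of_real (\<kappa> l * p l i) * \<rho> l $$ (a, b))"
    and "x \<in> carrier_vec 3"
  shows "\<eta> * (x \<bullet> x) \<le> (\<Sum>l\<in>L. \<kappa> l * \<bar>x \<bullet> bloch_vector (\<rho> l)\<bar>)"
proof -
  let ?T = "\<lambda>l. x \<bullet> bloch_vector (\<rho> l)"
  have outcome: "x \<bullet> bloch_vector (assemblage \<eta> x i) = (\<Sum>l\<in>L. \<kappa> l * p l i * ?T l)" if "i < 2" for i
    by (rule scalar_prod_bloch_vector_lincomb[where c = "\<lambda>l. \<kappa> l * p l i", OF _ assms(4)])
      (use assms(3) that in simp)
  have "\<eta> * (x \<bullet> x) = x \<bullet> bloch_vector (assemblage \<eta> x 1) - x \<bullet> bloch_vector (assemblage \<eta> x 0)"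
    using assms(4) by (simp add: bloch_vector_assemblage algebra_simps)
  also have "\<dots> = (\<Sum>l\<in>L. \<kappa> l * ((p l 1 - p l 0) * ?T l))"
    by (simp add: outcome sum_subtractf[symmetric] algebra_simps)
  also have "\<dots> \<le> (\<Sum>l\<in>L. \<kappa> l * \<bar>?T l\<bar>)"
  proof (rule sum_mono, rule mult_left_mono)
    fix l assume l: "l \<in> L"
    then have "p l 0 \<ge> 0" "p l 1 \<ge> 0" "p l 0 + p l 1 = 1"
      using assms(2) by (auto simp: sum_lessThan_2)
    then have "\<bar>p l 1 - p l 0\<bar> \<le> 1"
      by linarith
    then have "\<bar>p l 1 - p l 0\<bar> * \<bar>?T l\<bar> \<le> \<bar>?T l\<bar>"
      by (simp add: mult_left_le_one_le)
    then show "(p l 1 - p l 0) * ?T l \<le> \<bar>?T l\<bar>"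
      by (metis abs_ge_self abs_mult order_trans)
    show "\<kappa> l \<ge> 0"
      using assms(1) l by blast
  qed
  finally show ?thesis .
qed

lemma has_LHS_steering_inequality:
  assumes "has_LHS \<eta> n K"
    and "\<And>k. k \<in> K \<Longrightarrow> n k \<in> carrier_vec 3 \<and> n k \<bullet> n k = 1"
    and "\<And>r. r \<in> carrier_vec 3 \<Longrightarrow> r \<bullet> r \<le> 1 \<Longrightarrow> (\<Sum>k\<in>K. \<bar>n k \<bullet> r\<bar>) \<le> B"
  shows "real (card K) * \<eta> \<le> B"
proof -
  obtain L and \<kappa> :: "nat \<Rightarrow> real" and p :: "nat \<Rightarrow> nat \<Rightarrow> nat \<Rightarrow> real" and \<rho> :: "nat \<Rightarrow> complex mat"
    where \<kappa>: "\<forall>l\<in>L. \<kappa> l \<ge> 0" "(\<Sum>l\<in>L. \<kappa> l) = 1"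
      and p: "\<forall>l\<in>L. \<forall>x\<in>K. (\<forall>i<2. p l x i \<ge> 0) \<and> (\<Sum>i<2. p l x i) = 1"
      and \<rho>: "\<forall>l\<in>L. density_qubit (\<rho> l)"
      and model: "\<forall>x\<in>K. \<forall>i<2. \<forall>a<2. \<forall>b<2. assemblage \<eta> (n x) i $$ (a, b)
                    = (\<Sum>l\<in>L. complex_of_real (\<kappa> l * p l x i) * \<rho> l $$ (a, b))"
    using assms(1) unfolding has_LHS_def by blast
  have "real (card K) * \<eta> = (\<Sum>k\<in>K. \<eta> * (n k \<bullet> n k))"
    using assms(2) by simp
  also have "\<dots> \<le> (\<Sum>k\<in>K. \<Sum>l\<in>L. \<kappa> l * \<bar>n k \<bullet> bloch_vector (\<rho> l)\<bar>)"
  proof (rule sum_mono)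
    fix k assume k: "k \<in> K"
    show "\<eta> * (n k \<bullet> n k) \<le> (\<Sum>l\<in>L. \<kappa> l * \<bar>n k \<bullet> bloch_vector (\<rho> l)\<bar>)"
      by (rule lhs_model_steering_term_le[of L \<kappa> "\<lambda>l. p l k"]) (use \<kappa> p model assms(2) k in auto)
  qed
  also have "\<dots> = (\<Sum>l\<in>L. \<kappa> l * (\<Sum>k\<in>K. \<bar>n k \<bullet> bloch_vector (\<rho> l)\<bar>))"
    by (simp add: sum_distrib_left sum.swap[of _ K])
  also have "\<dots> \<le> (\<Sum>l\<in>L. \<kappa> l * B)"
    using \<kappa>(1) \<rho> assms(3) bloch_vector_carrier density_qubit_bloch_vector_norm
    by (intro sum_mono mult_left_mono) auto
  also have "\<dots> = B"
    using \<kappa>(2) by (simp flip: sum_distrib_right)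
  finally show ?thesis .
qed

section \<open>The regular icosahedron\<close>

lemma phi_gold_gt_1: "phi_gold > 1"
  unfolding phi_gold_def by simp

lemma phi_gold_square: "phi_gold\<^sup>2 = phi_gold + 1"
  unfolding phi_gold_def by (simp add: power2_eq_square field_simps)

lemma phi_gold_quartic: "(2 * phi_gold)\<^sup>2 * (1 + phi_gold\<^sup>2) = 16 * phi_gold + 12"
proof -
  have h: "phi_gold * phi_gold = phi_gold + 1"
    using phi_gold_square by (simp add: power2_eq_square)
  have "(2 * phi_gold)\<^sup>2 * (1 + phi_gold\<^sup>2) = 4 * (phi_gold * phi_gold) * (1 + phi_gold * phi_gold)"
    by (simp add: power2_eq_square)
  also have "\<dots> = 4 * (phi_gold + 1) * (phi_gold + 2)"
    unfolding h by simp
  also have "\<dots> = 4 * (phi_gold * phi_gold + 3 * phi_gold + 2)"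
    by (simp add: algebra_simps)
  also have "\<dots> = 16 * phi_gold + 12"
    unfolding h by simp
  finally show ?thesis .
qed

definition icosa_axis :: "nat \<Rightarrow> real vec" where
  "icosa_axis p = (1 / sqrt (1 + phi_gold\<^sup>2)) \<cdot>\<^sub>v vec_of_list
     ([[0, 1, phi_gold], [0, 1, - phi_gold], [1, phi_gold, 0],
       [1, - phi_gold, 0], [phi_gold, 0, 1], [- phi_gold, 0, 1]] ! p)"

lemma std_icosa_eq: "std_icosa = icosa_axis ` {..<6} \<union> uminus ` icosa_axis ` {..<6}"
proof -
  have sixes: "{..<6::nat} = {0,1,2,3,4,5}" by auto
  have signs: "{f s t | s t. s \<in> {-1,1::real} \<and> t \<in> {-1,1::real}} = {f 1 1, f 1 (-1), f (-1) (-1), f (-1) 1}"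
    for f :: "real \<Rightarrow> real \<Rightarrow> real vec" by auto
  show ?thesis
    unfolding std_icosa_def icosa_axis_def sixes signs
    by (simp add: uminus_smult_vec uminus_vCons uminus_vNil insert_commute)
qed

lemma icosa_axis_carrier: "p < 6 \<Longrightarrow> icosa_axis p \<in> carrier_vec 3"
  unfolding icosa_axis_def by (auto simp: less_Suc_eq numeral_eq_Suc)

lemma icosa_axis_norm: "p < 6 \<Longrightarrow> icosa_axis p \<bullet> icosa_axis p = 1"
proof -
  assume "p < 6"
  then have "icosa_axis p \<bullet> icosa_axis p = (1 / sqrt (1 + phi_gold\<^sup>2))\<^sup>2 * (1 + phi_gold\<^sup>2)"
    unfolding icosa_axis_def by (auto simp: less_Suc_eq numeral_eq_Suc power2_eq_square algebra_simps)
  also have "\<dots> = 1"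
    using add_pos_nonneg[of 1 "phi_gold\<^sup>2"] by (simp add: power_divide)
  finally show ?thesis .
qed

lemma icosa_axis_antipodal_inj:
  assumes "p < 6" "q < 6" "icosa_axis p = icosa_axis q \<or> icosa_axis p = - icosa_axis q"
  shows "p = q"
proof -
  have "1 + phi_gold\<^sup>2 > 0" by (simp add: add_pos_nonneg)
  then have "1 / sqrt (1 + phi_gold\<^sup>2) \<noteq> 0" by simp
  moreover have "phi_gold \<noteq> 0" "phi_gold \<noteq> 1" "phi_gold \<noteq> -1"
    using phi_gold_gt_1 by auto
  ultimately show ?thesis
    using assms unfolding icosa_axis_def
    by (auto simp: less_Suc_eq numeral_eq_Suc smult_vCons smult_vNil uminus_vCons uminus_vNil)
qed

lemma icosa_sign_combination_bound:
  fixes e :: "nat \<Rightarrow> real"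
  assumes "\<forall>i<6. e i \<in> {-1, 1}"
  shows "(e 2 + e 3 + phi_gold * (e 4 - e 5))\<^sup>2 + (e 0 + e 1 + phi_gold * (e 2 - e 3))\<^sup>2
           + (e 4 + e 5 + phi_gold * (e 0 - e 1))\<^sup>2 \<le> 16 * phi_gold + 12"
proof -
  let ?A = "(e 2 + e 3)\<^sup>2 + (e 0 + e 1)\<^sup>2 + (e 4 + e 5)\<^sup>2"
  let ?B = "2 * ((e 2 + e 3) * (e 4 - e 5) + (e 0 + e 1) * (e 2 - e 3) + (e 4 + e 5) * (e 0 - e 1))"
  let ?C = "(e 4 - e 5)\<^sup>2 + (e 2 - e 3)\<^sup>2 + (e 0 - e 1)\<^sup>2"
  have "e 0 \<in> {-1, 1}" "e 1 \<in> {-1, 1}" "e 2 \<in> {-1, 1}" "e 3 \<in> {-1, 1}" "e 4 \<in> {-1, 1}" "e 5 \<in> {-1, 1}"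
    using assms by auto
  then have AC: "?A + ?C = 12" and BC: "?B + ?C \<le> 16"
    by (simp_all; elim disjE; simp)+
  have "(e 2 + e 3 + phi_gold * (e 4 - e 5))\<^sup>2 + (e 0 + e 1 + phi_gold * (e 2 - e 3))\<^sup>2
           + (e 4 + e 5 + phi_gold * (e 0 - e 1))\<^sup>2 = ?A + phi_gold * ?B + phi_gold\<^sup>2 * ?C"
    by (simp add: power2_eq_square algebra_simps)
  also have "\<dots> = (?A + ?C) + phi_gold * (?B + ?C)"
    by (simp add: phi_gold_square algebra_simps)
  also have "\<dots> \<le> 12 + phi_gold * 16"
    using AC BC phi_gold_gt_1 by (intro add_mono mult_left_mono) simp_all
  finally show ?thesis by simp
qed

definition icosa_signed_sum :: "(nat \<Rightarrow> real) \<Rightarrow> real vec" where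
  "icosa_signed_sum e = (1 / sqrt (1 + phi_gold\<^sup>2)) \<cdot>\<^sub>v vec_of_list
     [e 2 + e 3 + phi_gold * (e 4 - e 5), e 0 + e 1 + phi_gold * (e 2 - e 3),
      e 4 + e 5 + phi_gold * (e 0 - e 1)]"

lemma icosa_signed_sum_carrier: "icosa_signed_sum e \<in> carrier_vec 3"
  by (rule carrier_vecI) (simp add: icosa_signed_sum_def)

lemma scalar_prod_icosa_signed_sum:
  assumes "y \<in> carrier_vec 3"
  shows "icosa_signed_sum e \<bullet> y = (\<Sum>p<6. e p * (icosa_axis p \<bullet> y))"
proof -
  define c where "c = 1 / sqrt (1 + phi_gold\<^sup>2)"
  obtain y0 y1 y2 where y: "y = vec_of_list [y0, y1, y2]"
    using vec3_eq_vec_of_list[OF assms] by blast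
  show ?thesis
    unfolding y icosa_signed_sum_def icosa_axis_def c_def[symmetric]
    by (simp add: eval_nat_numeral algebra_simps)
qed

lemma icosa_signed_sum_norm:
  assumes "\<forall>i<6. e i \<in> {-1, 1}"
  shows "icosa_signed_sum e \<bullet> icosa_signed_sum e \<le> (2 * phi_gold)\<^sup>2"
proof -
  define c where "c = 1 / sqrt (1 + phi_gold\<^sup>2)"
  have "1 + phi_gold\<^sup>2 > 0"
    by (simp add: add_pos_nonneg)
  then have c_sq: "c\<^sup>2 * (1 + phi_gold\<^sup>2) = 1"
    unfolding c_def by (simp add: power_divide)
  have "icosa_signed_sum e \<bullet> icosa_signed_sum e
          = c\<^sup>2 * ((e 2 + e 3 + phi_gold * (e 4 - e 5))\<^sup>2 + (e 0 + e 1 + phi_gold * (e 2 - e 3))\<^sup>2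
                   + (e 4 + e 5 + phi_gold * (e 0 - e 1))\<^sup>2)"
    unfolding icosa_signed_sum_def c_def[symmetric] by (simp add: power2_eq_square algebra_simps)
  also have "\<dots> \<le> c\<^sup>2 * (16 * phi_gold + 12)"
    by (intro mult_left_mono icosa_sign_combination_bound assms) simp
  also have "\<dots> = (2 * phi_gold)\<^sup>2"
    using c_sq by (simp flip: phi_gold_quartic)
  finally show ?thesis .
qed

lemma sum_abs_icosa_axis_le:
  assumes "y \<in> carrier_vec 3" "y \<bullet> y \<le> 1"
  shows "(\<Sum>p<6. \<bar>icosa_axis p \<bullet> y\<bar>) \<le> 1 + sqrt 5"
proof -
  define e where "e p = (if icosa_axis p \<bullet> y \<ge> 0 then 1 else -1 :: real)" for p
  have "(\<Sum>p<6. \<bar>icosa_axis p \<bullet> y\<bar>) = (\<Sum>p<6. e p * (icosa_axis p \<bullet> y))"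
    by (rule sum.cong) (auto simp: e_def)
  also have "\<dots> = icosa_signed_sum e \<bullet> y"
    by (rule scalar_prod_icosa_signed_sum[symmetric, OF assms(1)])
  also have "\<dots> \<le> (2 * phi_gold) * 1"
    using icosa_signed_sum_carrier assms icosa_signed_sum_norm phi_gold_gt_1
    by (intro scalar_prod_le_mult_of_norm_bounds) (auto simp: e_def)
  also have "\<dots> = 1 + sqrt 5"
    unfolding phi_gold_def by simp
  finally show ?thesis .
qed

lemma icosa_vertex_set_eq:
  assumes "S \<in> icosa_vertex_sets"
  obtains R where "R \<in> carrier_mat 3 3" "transpose_mat R * R = 1\<^sub>m 3"
    and "S = (\<lambda>p. R *\<^sub>v icosa_axis p) ` {..<6} \<union> uminus ` (\<lambda>p. R *\<^sub>v icosa_axis p) ` {..<6}"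
proof -
  obtain R where R: "R \<in> carrier_mat 3 3" "transpose_mat R * R = 1\<^sub>m 3"
    and S: "S = (\<lambda>v. R *\<^sub>v v) ` std_icosa"
    using assms unfolding icosa_vertex_sets_def by blast
  have "(\<lambda>v. R *\<^sub>v v) ` uminus ` icosa_axis ` {..<6} = uminus ` (\<lambda>p. R *\<^sub>v icosa_axis p) ` {..<6}"
    using R(1) icosa_axis_carrier by (force simp: image_image mult_mat_vec_uminus)
  then have "S = (\<lambda>p. R *\<^sub>v icosa_axis p) ` {..<6} \<union> uminus ` (\<lambda>p. R *\<^sub>v icosa_axis p) ` {..<6}"
    unfolding S std_icosa_eq image_Un by (simp add: image_image)
  with R that show thesis by blast
qed

lemma icosa_vertex_unit:
  assumes "S \<in> icosa_vertex_sets" "x \<in> S"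
  shows "x \<in> carrier_vec 3" "x \<bullet> x = 1"
proof -
  obtain R where R: "R \<in> carrier_mat 3 3" "transpose_mat R * R = 1\<^sub>m 3"
    and S: "S = (\<lambda>p. R *\<^sub>v icosa_axis p) ` {..<6} \<union> uminus ` (\<lambda>p. R *\<^sub>v icosa_axis p) ` {..<6}"
    using icosa_vertex_set_eq[OF assms(1)] by blast
  then obtain p where p: "p < 6" and x: "x = R *\<^sub>v icosa_axis p \<or> x = - (R *\<^sub>v icosa_axis p)"
    using assms(2) by blast
  have unit: "(R *\<^sub>v icosa_axis p) \<bullet> (R *\<^sub>v icosa_axis p) = 1"
    using orthogonal_mult_mat_vec_scalar_prod[OF R icosa_axis_carrier icosa_axis_carrier] p
    by (simp add: icosa_axis_norm)
  show "x \<in> carrier_vec 3"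
    using x mult_mat_vec_carrier[OF R(1) icosa_axis_carrier[OF p]] by auto
  show "x \<bullet> x = 1"
    using x unit R(1) by auto
qed

lemma sum_abs_scalar_prod_icosa_vertices_le:
  fixes n :: "'k \<Rightarrow> real vec"
  assumes "{n k | k. k \<in> K} \<union> {- n k | k. k \<in> K} \<in> icosa_vertex_sets" "finite K" "card K = 6"
    and "r \<in> carrier_vec 3" "r \<bullet> r \<le> 1"
  shows "(\<Sum>k\<in>K. \<bar>n k \<bullet> r\<bar>) \<le> 1 + sqrt 5"
proof -
  obtain R where R: "R \<in> carrier_mat 3 3" "transpose_mat R * R = 1\<^sub>m 3"
    and S: "{n k | k. k \<in> K} \<union> {- n k | k. k \<in> K}
              = (\<lambda>p. R *\<^sub>v icosa_axis p) ` {..<6} \<union> uminus ` (\<lambda>p. R *\<^sub>v icosa_axis p) ` {..<6}"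
    using icosa_vertex_set_eq[OF assms(1)] by blast
  define y where "y = transpose_mat R *\<^sub>v r"
  have y: "y \<in> carrier_vec 3" "y \<bullet> y \<le> 1"
    using orthogonal_mult_mat_vec_scalar_prod[OF _ orthogonal_transpose[OF R] assms(4,4)] R(1) assms(4,5)
    by (simp_all add: y_def)
  have antipodal: "p = q"
    if "p < 6" "q < 6" "R *\<^sub>v icosa_axis p = R *\<^sub>v icosa_axis q \<or> R *\<^sub>v icosa_axis p = - (R *\<^sub>v icosa_axis q)"
    for p q
  proof (rule icosa_axis_antipodal_inj[OF that(1,2)])
    show "icosa_axis p = icosa_axis q \<or> icosa_axis p = - icosa_axis q"
      using that orthogonal_mult_mat_vec_inj[OF R] icosa_axis_carrier R(1)
      by (metis mult_mat_vec_uminus uminus_carrier_vec)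
  qed
  have "(\<Sum>k\<in>K. \<bar>n k \<bullet> r\<bar>) = (\<Sum>p<6. \<bar>(R *\<^sub>v icosa_axis p) \<bullet> r\<bar>)"
    by (rule sum_abs_scalar_prod_reindex_antipodal[OF assms(2)])
      (use assms(3) S antipodal R(1) assms(4) in \<open>auto simp: image_image\<close>)
  also have "\<dots> = (\<Sum>p<6. \<bar>icosa_axis p \<bullet> y\<bar>)"
  proof (rule sum.cong[OF refl])
    fix p :: nat assume "p \<in> {..<6}"
    then have a: "icosa_axis p \<in> carrier_vec 3"
      by (simp add: icosa_axis_carrier)
    have "(R *\<^sub>v icosa_axis p) \<bullet> r = r \<bullet> (R *\<^sub>v icosa_axis p)"
      using R(1) a assms(4) by (intro comm_scalar_prod[of _ 3]) auto
    also have "\<dots> = y \<bullet> icosa_axis p"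
      unfolding y_def by (rule transpose_vec_mult_scalar[symmetric, OF R(1) a assms(4)])
    also have "\<dots> = icosa_axis p \<bullet> y"
      using y(1) a by (rule comm_scalar_prod)
    finally show "\<bar>(R *\<^sub>v icosa_axis p) \<bullet> r\<bar> = \<bar>icosa_axis p \<bullet> y\<bar>"
      by simp
  qed
  also have "\<dots> \<le> 1 + sqrt 5"
    by (rule sum_abs_icosa_axis_le[OF y])
  finally show ?thesis .
qed

theorem mainTheorem6:
  fixes \<eta> :: real and n :: "nat \<Rightarrow> real vec"
  assumes "0 \<le> \<eta>" and "\<eta> \<le> 1"
    and "{n k | k. k \<in> {1..6}} \<union> {- n k | k. k \<in> {1..6}} \<in> icosa_vertex_sets"
    and "has_LHS \<eta> n {1..6}"
  shows "\<eta> \<le> (3 + sqrt 5) / (3 * (1 + sqrt 5))"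
proof -
  have unit: "n k \<in> carrier_vec 3 \<and> n k \<bullet> n k = 1" if "k \<in> {1..6}" for k
    using icosa_vertex_unit[OF assms(3), of "n k"] that by blast
  have "real (card {1..6::nat}) * \<eta> \<le> 1 + sqrt 5"
    by (rule has_LHS_steering_inequality[OF assms(4) unit sum_abs_scalar_prod_icosa_vertices_le[OF assms(3)]])
      simp_all
  then have "\<eta> \<le> (1 + sqrt 5) / 6"
    by simp
  also have "\<dots> = (3 + sqrt 5) / (3 * (1 + sqrt 5))"
  proof -
    have "(1 + sqrt 5) * (3 * (1 + sqrt 5)) = 6 * (3 + sqrt (5::real))"
      by (simp add: algebra_simps)
    moreover have "1 + sqrt 5 > (0::real)"
      by (simp add: add_pos_nonneg)
    ultimately show ?thesis
      by (simp add: field_simps)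
  qed
  finally show ?thesis .
qed

end
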